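(* Let $\boldsymbol\theta_0,\boldsymbol\theta_1,\dots\in\mathbb{R}^{d\times d}$ be orthogonal and let $Z_0^{\parallel},Z_1^{\parallel},\dots\subseteq\mathbb{R}^d$ be linear subspaces with $\boldsymbol\theta_t Z_t^{\parallel}=Z_{t+1}^{\parallel}$; let $\mathbf{P}_t$ be the orthogonal projection onto $Z_t^{\parallel}$ and let $\alpha_t\in\mathbb{R}$. Define $\mathbf{P}_t^0=\mathbf{P}_t$, $\mathbf{P}_t^{s+1}=\boldsymbol\theta_{t-s-1}^{-1}\mathbf{P}_t^s\boldsymbol\theta_{t-s-1}$ for $0\le s\le t-1$, $\mathbf{G}_t^s=\alpha_t\mathbf{I}+(1-\alpha_t)\mathbf{P}_t^s$, and $\mathbf{F}_t=\mathbf{G}_{t-1}^{t-1}\mathbf{G}_{t-2}^{t-2}\cdots\mathbf{G}_0^0$ for $t\ge1$. Then for all $t\ge1$, $$\mathbf{F}_t=\Big(\prod_{s=0}^{t-1}\alpha_s\Big)\mathbf{I}+\Big(1-\prod_{s=0}^{t-1}\alpha_s\Big)\mathbf{P}_0 .$$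
   Context: $Z_t^{\parallel}$ is the linear embedding subspace of the data at layer $t$ of a network with linear layer maps $\boldsymbol\theta_t$; $\alpha_t$ are control regularization factors. *)

theory Defs
  imports "HOL-Analysis.Analysis"
begin

definition is_orth_proj :: "real^'n^'n \<Rightarrow> (real^'n) set \<Rightarrow> bool" where
  "is_orth_proj P Z \<longleftrightarrow> (\<forall>x. P *v x \<in> Z \<and> (\<forall>z\<in>Z. (x - P *v x) \<bullet> z = 0))"

fun Pconj :: "(nat \<Rightarrow> real^'n^'n) \<Rightarrow> (nat \<Rightarrow> real^'n^'n) \<Rightarrow> nat \<Rightarrow> nat \<Rightarrow> real^'n^'n" where
  "Pconj \<theta> P t 0 = P t"
| "Pconj \<theta> P t (Suc s) = matrix_inv (\<theta> (t - s - 1)) ** Pconj \<theta> P t s ** \<theta> (t - s - 1)"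

definition Gmat :: "(nat \<Rightarrow> real^'n^'n) \<Rightarrow> (nat \<Rightarrow> real^'n^'n) \<Rightarrow> (nat \<Rightarrow> real) \<Rightarrow> nat \<Rightarrow> nat \<Rightarrow> real^'n^'n" where
  "Gmat \<theta> P \<alpha> t s = \<alpha> t *\<^sub>R mat 1 + (1 - \<alpha> t) *\<^sub>R Pconj \<theta> P t s"

fun Fmat :: "(nat \<Rightarrow> real^'n^'n) \<Rightarrow> (nat \<Rightarrow> real^'n^'n) \<Rightarrow> (nat \<Rightarrow> real) \<Rightarrow> nat \<Rightarrow> real^'n^'n" where
  "Fmat \<theta> P \<alpha> 0 = mat 1"
| "Fmat \<theta> P \<alpha> (Suc t) = Gmat \<theta> P \<alpha> t t ** Fmat \<theta> P \<alpha> t"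

end

theory Submission
  imports Defs
begin

text \<open>Conjugation by an orthogonal map carrying \<open>Z\<close> onto \<open>Z'\<close> turns the orthogonal projection
  onto \<open>Z'\<close> into the one onto \<open>Z\<close>. So \<open>P_t^s\<close> is the orthogonal projection onto \<open>Z_(t-s)\<close>, and
  \<open>P_t^t = P_0\<close> by uniqueness of orthogonal projections. Every factor \<open>G_t^t\<close> of \<open>F_t\<close> is then of the
  form \<open>a I + (1 - a) P_0\<close> with \<open>P_0\<close> idempotent, and such matrices multiply like their scalars \<open>a\<close>.\<close>

lemma matrix_inv_unique:
  fixes A B :: "'a::semiring_1^'n^'n"
  assumes "A ** B = mat 1" and "B ** A = mat 1"
  shows "matrix_inv A = B"
proof -
  have inv: "A ** matrix_inv A = mat 1 \<and> matrix_inv A ** A = mat 1"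
    unfolding matrix_inv_def using assms by (rule someI[of _ B, OF conjI])
  then have "matrix_inv A = (B ** A) ** matrix_inv A"
    using assms by simp
  also have "\<dots> = B"
    using inv by (simp flip: matrix_mul_assoc)
  finally show ?thesis .
qed

lemma matrix_inv_orthogonal_matrix:
  "orthogonal_matrix (Q::real^'n^'n) \<Longrightarrow> matrix_inv Q = transpose Q"
  unfolding orthogonal_matrix_def by (rule matrix_inv_unique) auto

lemma orthogonal_matrix_transpose_cancel:
  "orthogonal_matrix (Q::real^'n^'n) \<Longrightarrow> transpose Q *v (Q *v x) = x"
  by (metis matrix_vector_mul_assoc orthogonal_matrix matrix_vector_mul_lid)

lemma orthogonal_matrix_inner:
  assumes "orthogonal_matrix (Q::real^'n^'n)"
  shows "(Q *v x) \<bullet> (Q *v y) = x \<bullet> y"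
proof -
  have "(Q *v x) \<bullet> (Q *v y) = (transpose Q *v (Q *v x)) \<bullet> y"
    by (simp add: dot_lmul_matrix)
  also have "\<dots> = x \<bullet> y"
    by (simp only: orthogonal_matrix_transpose_cancel[OF assms])
  finally show ?thesis .
qed

lemma is_orth_proj_fixes:
  assumes "subspace Z" and "is_orth_proj R Z" and "z \<in> Z"
  shows "R *v z = z"
proof -
  have "z - R *v z \<in> Z"
    using assms by (simp add: is_orth_proj_def subspace_diff)
  then have "(z - R *v z) \<bullet> (z - R *v z) = 0"
    using assms(2) by (simp add: is_orth_proj_def)
  then show ?thesis by simp
qed

lemma is_orth_proj_idempotent:
  assumes "subspace Z" and "is_orth_proj R Z"
  shows "R ** R = R"
  using is_orth_proj_fixes[OF assms] assms(2)
  by (simp add: matrix_eq is_orth_proj_def flip: matrix_vector_mul_assoc)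

lemma is_orth_proj_unique:
  assumes "subspace Z" and "is_orth_proj R Z" and "is_orth_proj S Z"
  shows "R = S"
proof -
  have "R *v x = S *v x" for x
  proof -
    have "R *v x - S *v x \<in> Z"
      using assms by (simp add: is_orth_proj_def subspace_diff)
    then have "(x - R *v x) \<bullet> (R *v x - S *v x) = 0" "(x - S *v x) \<bullet> (R *v x - S *v x) = 0"
      using assms(2,3) by (simp_all add: is_orth_proj_def)
    then have "(R *v x - S *v x) \<bullet> (R *v x - S *v x) = 0"
      by (simp add: inner_diff_left inner_diff_right inner_commute)
    then show ?thesis by simp
  qed
  then show ?thesis by (simp add: matrix_eq)
qed

lemma is_orth_proj_orthogonal_conj:
  assumes Q: "orthogonal_matrix (Q::real^'n^'n)"
    and image: "(\<lambda>x. Q *v x) ` Z = Z'"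
    and R: "is_orth_proj R Z'"
  shows "is_orth_proj (matrix_inv Q ** R ** Q) Z"
  unfolding is_orth_proj_def
proof (intro allI conjI ballI)
  fix x
  have conj: "matrix_inv Q ** R ** Q *v x = transpose Q *v (R *v (Q *v x))"
    by (simp add: matrix_inv_orthogonal_matrix[OF Q] matrix_vector_mul_assoc matrix_mul_assoc)
  have "R *v (Q *v x) \<in> Z'"
    using R by (simp add: is_orth_proj_def)
  then obtain z where "z \<in> Z" "R *v (Q *v x) = Q *v z"
    using image by blast
  then show "matrix_inv Q ** R ** Q *v x \<in> Z"
    using conj orthogonal_matrix_transpose_cancel[OF Q] by metis
  fix w assume "w \<in> Z"
  then have "(Q *v x - R *v (Q *v x)) \<bullet> (Q *v w) = 0"
    using image R by (auto simp: is_orth_proj_def)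
  then show "(x - matrix_inv Q ** R ** Q *v x) \<bullet> w = 0"
    by (simp add: conj inner_diff_left dot_lmul_matrix orthogonal_matrix_inner[OF Q])
qed

lemma Pconj_is_orth_proj:
  assumes orth: "\<And>t. orthogonal_matrix (\<theta> t)"
    and img: "\<And>t. (\<lambda>x. \<theta> t *v x) ` Z t = Z (Suc t)"
    and proj: "\<And>t. is_orth_proj (P t) (Z t)"
    and "s \<le> t"
  shows "is_orth_proj (Pconj \<theta> P t s) (Z (t - s))"
  using \<open>s \<le> t\<close>
proof (induction s)
  case 0
  then show ?case using proj by simp
next
  case (Suc s)
  then have "is_orth_proj (Pconj \<theta> P t s) (Z (Suc (t - Suc s)))"
    by (simp add: Suc_diff_Suc)
  from is_orth_proj_orthogonal_conj[OF orth img this] show ?case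
    by (simp add: diff_diff_add)
qed

lemma Pconj_diagonal:
  assumes orth: "\<And>t. orthogonal_matrix (\<theta> t)"
    and sub: "subspace (Z 0)"
    and img: "\<And>t. (\<lambda>x. \<theta> t *v x) ` Z t = Z (Suc t)"
    and proj: "\<And>t. is_orth_proj (P t) (Z t)"
  shows "Pconj \<theta> P t t = P 0"
  using is_orth_proj_unique[OF sub _ proj]
    Pconj_is_orth_proj[where Z=Z and s=t and t=t, OF orth img proj]
  by simp

lemma affine_idempotent_mult:
  fixes P :: "real^'n^'n"
  assumes "P ** P = P"
  shows "(a *\<^sub>R mat 1 + (1 - a) *\<^sub>R P) ** (c *\<^sub>R mat 1 + (1 - c) *\<^sub>R P)
    = (a * c) *\<^sub>R mat 1 + (1 - a * c) *\<^sub>R P"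
proof -
  have idem: "P *v (P *v x) = P *v x" for x
    using assms by (simp add: matrix_vector_mul_assoc)
  have "(a *\<^sub>R mat 1 + (1 - a) *\<^sub>R P) ** (c *\<^sub>R mat 1 + (1 - c) *\<^sub>R P)
      = (a * c) *\<^sub>R mat 1 + (a * (1 - c) + (1 - a) * c + (1 - a) * (1 - c)) *\<^sub>R P"
    by (simp add: matrix_eq matrix_vector_mul_assoc[symmetric] matrix_vector_right_distrib
        scaleR_matrix_vector_assoc[symmetric] matrix_vector_mult_scaleR idem algebra_simps)
  then show ?thesis by (simp add: algebra_simps)
qed

lemma Fmat_eq_affine:
  assumes diag: "\<And>t. Pconj \<theta> P t t = P 0" and idem: "P 0 ** P 0 = P 0"
  shows "Fmat \<theta> P \<alpha> t = (\<Prod>s<t. \<alpha> s) *\<^sub>R mat 1 + (1 - (\<Prod>s<t. \<alpha> s)) *\<^sub>R P 0"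
proof (induction t)
  case 0
  then show ?case by simp
next
  case (Suc t)
  let ?c = "\<Prod>s<t. \<alpha> s"
  have "Fmat \<theta> P \<alpha> (Suc t)
      = (\<alpha> t *\<^sub>R mat 1 + (1 - \<alpha> t) *\<^sub>R P 0) ** (?c *\<^sub>R mat 1 + (1 - ?c) *\<^sub>R P 0)"
    by (simp only: Fmat.simps Gmat_def diag Suc.IH)
  also have "\<dots> = (\<alpha> t * ?c) *\<^sub>R mat 1 + (1 - \<alpha> t * ?c) *\<^sub>R P 0"
    by (rule affine_idempotent_mult[OF idem])
  finally show ?case
    by (simp only: prod.lessThan_Suc mult.commute)
qed

theorem lemma5:
  fixes \<theta> P :: "nat \<Rightarrow> real^'n^'n" and Z :: "nat \<Rightarrow> (real^'n) set" and \<alpha> :: "nat \<Rightarrow> real"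
  assumes orth: "\<And>t. orthogonal_matrix (\<theta> t)"
    and sub: "\<And>t. subspace (Z t)"
    and img: "\<And>t. (\<lambda>x. \<theta> t *v x) ` Z t = Z (Suc t)"
    and proj: "\<And>t. is_orth_proj (P t) (Z t)"
    and t: "t \<ge> 1"
  shows "Fmat \<theta> P \<alpha> t = (\<Prod>s<t. \<alpha> s) *\<^sub>R mat 1 + (1 - (\<Prod>s<t. \<alpha> s)) *\<^sub>R P 0"
proof (rule Fmat_eq_affine)
  show "Pconj \<theta> P t' t' = P 0" for t'
    using Pconj_diagonal[where Z=Z, OF orth sub img proj] .
  show "P 0 ** P 0 = P 0"
    using is_orth_proj_idempotent[OF sub proj] .
qed

end
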